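(* Let $N$ be a non-trivial Abelian group, $Q$ an infinite group, and $\alpha\colon Q\to \mathrm{Aut}(N)$ a homomorphism whose action is free outside $0$, i.e. if $q\in Q$ and $n\in N\setminus\{0\}$ satisfy $\alpha(q)(n)=n$ then $q=1$. Let $\Gamma=N\rtimes_\alpha Q$ and suppose $\Gamma$ is finitely generated. Then $N$ is infinite and the extension $0\to N\to\Gamma\to Q\to 1$ is acentral (i.e. $N$ is an acentral subgroup of $\Gamma$). In particular, $\Gamma$ is not presentable by a product.
   Context: A subgroup $A$ of a group $\Gamma$ is called acentral if for every $g\in A\setminus\{1\}$ the centraliser $C_\Gamma(g)$ is contained in $A$; an extension $1\to N\to\Gamma\to Q\to 1$ is acentral if $N$ is acentral in $\Gamma$. An infinite group $\Gamma$ is not presentable by a product if for every homomorphism $\varphi\colon \Gamma_1\times\Gamma_2\to\Gamma$ whose image has finite index in $\Gamma$, at least one of $\varphi(\Gamma_1)$, $\varphi(\Gamma_2)$ is finite. *)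

theory Defs
  imports "HOL-Algebra.Algebra"
begin

definition semidirect_prod ::
  "('a, 'm) monoid_scheme \<Rightarrow> ('b, 'n) monoid_scheme \<Rightarrow> ('b \<Rightarrow> 'a \<Rightarrow> 'a) \<Rightarrow> ('a \<times> 'b) monoid" where
  "semidirect_prod N Q \<alpha> =
     \<lparr>carrier = carrier N \<times> carrier Q,
      monoid.mult = (\<lambda>(n1, q1) (n2, q2). (n1 \<otimes>\<^bsub>N\<^esub> \<alpha> q1 n2, q1 \<otimes>\<^bsub>Q\<^esub> q2)),
      one = (\<one>\<^bsub>N\<^esub>, \<one>\<^bsub>Q\<^esub>)\<rparr>"

definition normal_factor ::
  "('a, 'm) monoid_scheme \<Rightarrow> ('b, 'n) monoid_scheme \<Rightarrow> ('a \<times> 'b) set" where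
  "normal_factor N Q = carrier N \<times> {\<one>\<^bsub>Q\<^esub>}"

definition centraliser :: "('a, 'm) monoid_scheme \<Rightarrow> 'a \<Rightarrow> 'a set" where
  "centraliser G g = {h \<in> carrier G. h \<otimes>\<^bsub>G\<^esub> g = g \<otimes>\<^bsub>G\<^esub> h}"

definition acentral :: "('a, 'm) monoid_scheme \<Rightarrow> 'a set \<Rightarrow> bool" where
  "acentral G A \<longleftrightarrow> subgroup A G \<and> (\<forall>g \<in> A - {\<one>\<^bsub>G\<^esub>}. centraliser G g \<subseteq> A)"

definition finitely_generated_group :: "('a, 'm) monoid_scheme \<Rightarrow> bool" where
  "finitely_generated_group G \<longleftrightarrow>
     (\<exists>S. finite S \<and> S \<subseteq> carrier G \<and> generate G S = carrier G)"

definition product_presentation ::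
  "('a, 'm) monoid_scheme \<Rightarrow> ('c, 'd) monoid_scheme \<Rightarrow> ('e, 'f) monoid_scheme
     \<Rightarrow> ('c \<times> 'e \<Rightarrow> 'a) \<Rightarrow> bool" where
  "product_presentation \<Gamma> G1 G2 \<phi> \<longleftrightarrow>
     group G1 \<and> group G2 \<and> \<phi> \<in> hom (G1 \<times>\<times> G2) \<Gamma> \<and>
     finite (rcosets\<^bsub>\<Gamma>\<^esub> (\<phi> ` carrier (G1 \<times>\<times> G2)))"

end

theory Submission
  imports Defs
begin

text \<open>
  A free action makes each orbit map \<open>q \<mapsto> \<alpha> q n\<close> with \<open>n \<noteq> 1\<close> injective, so \<open>N\<close> is
  infinite; and, \<open>N\<close> being abelian, \<open>(m, q)\<close> commutes with \<open>(n, 1)\<close> only if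
  \<open>\<alpha> q n = n\<close>, i.e. \<open>q = 1\<close>, so \<open>N\<close> is acentral.

  Now let \<open>K\<close> be an infinite acentral kernel of infinite index and let \<open>A\<close>, \<open>B\<close> be the
  commuting images of the two factors, \<open>AB\<close> of finite index. If \<open>A\<close> (say) meets \<open>K\<close>
  non-trivially, acentrality puts \<open>B\<close> into \<open>K\<close>, and then, \<open>B\<close> being infinite, also \<open>A\<close>;
  so \<open>AB \<subseteq> K\<close>, contradicting the infinite index of \<open>K\<close>. Otherwise the quotient map
  \<open>\<pi>\<close> is injective on \<open>A\<close>. Since \<open>K\<close> is infinite and \<open>AB\<close> has finite index, some
  \<open>ab \<noteq> 1\<close> lies in \<open>K\<close>; then \<open>\<pi> a = (\<pi> b)\<inverse>\<close> commutes with \<open>\<pi> A\<close>, so \<open>a\<close>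
  commutes with \<open>A\<close>, so \<open>A\<close> centralises \<open>ab\<close> and lies in \<open>A \<inter> K = 1\<close>.
\<close>

lemma (in group) finite_if_inter_trivial_finite_rcosets:
  assumes "\<one> \<in> H" "H \<subseteq> carrier G" "subgroup K G" "H \<inter> K \<subseteq> {\<one>}"
    and "finite (rcosets H)"
  shows "finite K"
proof -
  have "inj_on (\<lambda>k. H #> k) K"
  proof (rule inj_onI)
    fix k k' assume k: "k \<in> K" "k' \<in> K" and eq: "H #> k = H #> k'"
    have kG: "k \<in> carrier G" "k' \<in> carrier G" using k subgroup.mem_carrier[OF assms(3)] by auto
    have "k \<in> H #> k" using assms(1) kG by (force simp: r_coset_def)
    then obtain x where x: "x \<in> H" "k = x \<otimes> k'" using eq by (auto simp: r_coset_def)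
    then have "x = k \<otimes> inv k'" using kG assms(2) by (simp add: m_assoc subsetD)
    then have "x \<in> K" using k assms(3) by (simp add: subgroup.m_closed subgroup.m_inv_closed)
    then have "x = \<one>" using x assms(4) by blast
    then show "k = k'" using x kG by simp
  qed
  moreover have "(\<lambda>k. H #> k) ` K \<subseteq> rcosets H"
    using subgroup.mem_carrier[OF assms(3)] by (auto simp: RCOSETS_def)
  ultimately show ?thesis
    using assms(5) by (metis finite_imageD finite_subset)
qed

lemma (in group_hom) finite_image_if_finite_rcosets_in_kernel:
  assumes "\<one> \<in> S" "S \<subseteq> kernel G H h" and "finite (rcosets S)"
  shows "finite (h ` carrier G)"
proof -
  have "h ` (S #> g) \<subseteq> {h g}" if "g \<in> carrier G" for g
    using assms(2) that by (auto simp: r_coset_def kernel_def)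
  then have "finite (h ` C)" if "C \<in> rcosets S" for C
    using that by (auto simp: RCOSETS_def intro: finite_subset)
  moreover have "h ` carrier G \<subseteq> (\<Union>C \<in> rcosets S. h ` C)"
    using assms(1) by (force simp: RCOSETS_def r_coset_def)
  ultimately show ?thesis
    using assms(3) by (meson finite_UN_I finite_subset)
qed

lemma (in group) commute_if_commute_with_inverse:
  assumes "x \<otimes> y = \<one>" "z \<otimes> y = y \<otimes> z" "x \<in> carrier G" "y \<in> carrier G" "z \<in> carrier G"
  shows "x \<otimes> z = z \<otimes> x"
  using assms by (metis l_cancel_one l_one m_assoc m_closed)

lemma acentral_contains_commuting_set:
  assumes "acentral G K" "a \<in> K" "a \<noteq> \<one>\<^bsub>G\<^esub>" "B \<subseteq> carrier G"
    and "\<forall>b \<in> B. b \<otimes>\<^bsub>G\<^esub> a = a \<otimes>\<^bsub>G\<^esub> b"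
  shows "B \<subseteq> K"
  using assms by (auto simp: acentral_def centraliser_def)

lemma acentral_contains_commuting_pair:
  assumes "acentral G K" "A \<subseteq> carrier G" "B \<subseteq> carrier G"
    and comm: "\<forall>a \<in> A. \<forall>b \<in> B. a \<otimes>\<^bsub>G\<^esub> b = b \<otimes>\<^bsub>G\<^esub> a"
    and "infinite B" "a \<in> A \<inter> K" "a \<noteq> \<one>\<^bsub>G\<^esub>"
  shows "A \<subseteq> K \<and> B \<subseteq> K"
proof
  show BK: "B \<subseteq> K"
    using assms by (intro acentral_contains_commuting_set[of G K a]) auto
  have "infinite (B - {\<one>\<^bsub>G\<^esub>})"
    using \<open>infinite B\<close> by simp
  then obtain b where "b \<in> B" "b \<noteq> \<one>\<^bsub>G\<^esub>"
    by (metis Diff_iff ex_in_conv finite.emptyI singletonI)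
  then show "A \<subseteq> K"
    using assms BK by (intro acentral_contains_commuting_set[of G K b]) auto
qed

lemma (in group_hom) inj_on_subgroup_if_trivial_kernel:
  assumes "subgroup A G" "A \<inter> kernel G H h \<subseteq> {\<one>}"
  shows "inj_on h A"
  using assms subgroup.one_closed[OF assms(1)] subgroup.mem_carrier[OF assms(1)]
  by (subst inj_on_subgroup_iff_trivial_ker) (auto simp: kernel_def)

lemma (in group_hom) acentral_kernel_contains_commuting_factor:
  assumes acentral: "acentral G (kernel G H h)"
    and A: "subgroup A G" and BG: "B \<subseteq> carrier G"
    and comm: "\<forall>a \<in> A. \<forall>b \<in> B. a \<otimes> b = b \<otimes> a" and inj_A: "inj_on h A"
    and a: "a \<in> A" and b: "b \<in> B"
    and ab_K: "a \<otimes> b \<in> kernel G H h" and ab_one: "a \<otimes> b \<noteq> \<one>"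
  shows "A \<subseteq> kernel G H h"
proof
  fix a' assume a': "a' \<in> A"
  have in_G: "a \<in> carrier G" "a' \<in> carrier G" "b \<in> carrier G"
    using a a' b BG subgroup.mem_carrier[OF A] by auto
  have hab: "h a \<otimes>\<^bsub>H\<^esub> h b = \<one>\<^bsub>H\<^esub>"
    using ab_K in_G unfolding kernel_def by simp
  have a'b: "a' \<otimes> b = b \<otimes> a'"
    using comm a' b by blast
  then have "h a' \<otimes>\<^bsub>H\<^esub> h b = h b \<otimes>\<^bsub>H\<^esub> h a'"
    using in_G by (simp flip: hom_mult)
  then have "h a \<otimes>\<^bsub>H\<^esub> h a' = h a' \<otimes>\<^bsub>H\<^esub> h a"
    using H.commute_if_commute_with_inverse[OF hab] in_G by simp
  then have "h (a \<otimes> a') = h (a' \<otimes> a)"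
    using in_G by simp
  moreover have "a \<otimes> a' \<in> A" "a' \<otimes> a \<in> A"
    using a a' subgroup.m_closed[OF A] by auto
  ultimately have aa': "a \<otimes> a' = a' \<otimes> a"
    using inj_A by (blast dest: inj_onD)
  have "a' \<otimes> (a \<otimes> b) = (a \<otimes> a') \<otimes> b"
    using in_G aa' by (simp add: G.m_assoc)
  also have "\<dots> = a \<otimes> (b \<otimes> a')"
    using in_G a'b by (simp add: G.m_assoc)
  finally have "a' \<otimes> (a \<otimes> b) = (a \<otimes> b) \<otimes> a'"
    using in_G by (simp add: G.m_assoc)
  then show "a' \<in> kernel G H h"
    using acentral ab_K ab_one in_G unfolding acentral_def centraliser_def by blast
qed

lemma (in group_hom) finite_commuting_factor_if_acentral_kernel:
  assumes acentral: "acentral G (kernel G H h)"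
    and K_infinite: "infinite (kernel G H h)" and image_infinite: "infinite (h ` carrier G)"
    and A: "subgroup A G" and B: "subgroup B G"
    and comm: "\<forall>a \<in> A. \<forall>b \<in> B. a \<otimes> b = b \<otimes> a"
    and index: "finite (rcosets (A <#> B))"
  shows "finite A \<or> finite B"
proof (rule ccontr)
  define K where "K = kernel G H h"
  assume "\<not> ?thesis"
  then have A_infinite: "infinite A" and B_infinite: "infinite B" by auto
  have K: "subgroup K G"
    unfolding K_def by (rule subgroup_kernel)
  have AG: "A \<subseteq> carrier G" and BG: "B \<subseteq> carrier G"
    using A B subgroup.subset by blast+
  have one_AB: "\<one> \<in> A <#> B"
    using subgroup.one_closed[OF A] subgroup.one_closed[OF B] unfolding set_mult_def by force
  have AB_G: "A <#> B \<subseteq> carrier G"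
    using AG BG unfolding set_mult_def by blast
  have not_both: "\<not> (A \<subseteq> K \<and> B \<subseteq> K)"
  proof
    assume "A \<subseteq> K \<and> B \<subseteq> K"
    then have "A <#> B \<subseteq> K"
      using subgroup.m_closed[OF K] unfolding set_mult_def by blast
    then show False
      using finite_image_if_finite_rcosets_in_kernel[OF one_AB _ index] image_infinite
      unfolding K_def by blast
  qed
  have "A \<inter> K \<subseteq> {\<one>}"
    using acentral_contains_commuting_pair[OF acentral[folded K_def] AG BG comm B_infinite]
      not_both by blast
  then have inj_A: "inj_on h A"
    using inj_on_subgroup_if_trivial_kernel[OF A] unfolding K_def by blast
  have "\<not> (A <#> B) \<inter> K \<subseteq> {\<one>}"
    using G.finite_if_inter_trivial_finite_rcosets[OF one_AB AB_G K] index K_infinite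
    unfolding K_def by blast
  then obtain a b where a: "a \<in> A" and b: "b \<in> B"
    and ab_K: "a \<otimes> b \<in> K" and ab_one: "a \<otimes> b \<noteq> \<one>"
    unfolding set_mult_def by blast
  have "A \<subseteq> K"
    using acentral_kernel_contains_commuting_factor[OF acentral A BG comm inj_A a b] ab_K ab_one
    unfolding K_def by blast
  then have "A \<subseteq> {\<one>}"
    using \<open>A \<inter> K \<subseteq> {\<one>}\<close> by blast
  then show False
    using A_infinite finite_subset by blast
qed

lemma (in group_hom) product_presentation_finite_factor:
  assumes acentral: "acentral G (kernel G H h)"
    and K_infinite: "infinite (kernel G H h)" and image_infinite: "infinite (h ` carrier G)"
    and presentation: "product_presentation G G1 G2 \<phi>"
  shows "finite (\<phi> ` (carrier G1 \<times> {\<one>\<^bsub>G2\<^esub>})) \<or> finite (\<phi> ` ({\<one>\<^bsub>G1\<^esub>} \<times> carrier G2))"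
proof -
  interpret G1: group G1 using presentation by (simp add: product_presentation_def)
  interpret G2: group G2 using presentation by (simp add: product_presentation_def)
  interpret \<phi>: group_hom "G1 \<times>\<times> G2" G \<phi>
    using presentation G.group_axioms
    by (simp add: product_presentation_def group_hom_def group_hom_axioms_def DirProd_group)
  define A where "A = \<phi> ` (carrier G1 \<times> {\<one>\<^bsub>G2\<^esub>})"
  define B where "B = \<phi> ` ({\<one>\<^bsub>G1\<^esub>} \<times> carrier G2)"
  have split: "\<phi> (x, \<one>\<^bsub>G2\<^esub>) \<otimes> \<phi> (\<one>\<^bsub>G1\<^esub>, y) = \<phi> (x, y)"
    "\<phi> (\<one>\<^bsub>G1\<^esub>, y) \<otimes> \<phi> (x, \<one>\<^bsub>G2\<^esub>) = \<phi> (x, y)"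
    if "x \<in> carrier G1" "y \<in> carrier G2" for x y
    using that \<phi>.hom_mult[of "(x, \<one>\<^bsub>G2\<^esub>)" "(\<one>\<^bsub>G1\<^esub>, y)"]
      \<phi>.hom_mult[of "(\<one>\<^bsub>G1\<^esub>, y)" "(x, \<one>\<^bsub>G2\<^esub>)"] by (simp_all del: \<phi>.hom_mult)
  have A: "subgroup A G" and B: "subgroup B G"
    unfolding A_def B_def
    by (intro \<phi>.subgroup_img_is_subgroup DirProd_subgroups G1.subgroup_self G2.subgroup_self
          G1.triv_subgroup G2.triv_subgroup G1.is_group G2.is_group)+
  have comm: "\<forall>a \<in> A. \<forall>b \<in> B. a \<otimes> b = b \<otimes> a"
    unfolding A_def B_def using split by auto
  have image: "A <#> B = \<phi> ` carrier (G1 \<times>\<times> G2)"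
  proof
    show "A <#> B \<subseteq> \<phi> ` carrier (G1 \<times>\<times> G2)"
      unfolding A_def B_def set_mult_def using split by auto
    show "\<phi> ` carrier (G1 \<times>\<times> G2) \<subseteq> A <#> B"
    proof
      fix z assume "z \<in> \<phi> ` carrier (G1 \<times>\<times> G2)"
      then obtain x y where "x \<in> carrier G1" "y \<in> carrier G2" "z = \<phi> (x, y)" by auto
      then show "z \<in> A <#> B"
        using split(1)[of x y] unfolding A_def B_def set_mult_def by blast
    qed
  qed
  have "finite (rcosets (A <#> B))"
    using presentation image by (simp add: product_presentation_def)
  then show ?thesis
    using finite_commuting_factor_if_acentral_kernel[OF acentral K_infinite image_infinite A B comm]
    by (simp add: A_def B_def)
qed

locale semidirect_product = N: group N + Q: group Q
  for N :: "('a, 'm) monoid_scheme" and Q :: "('b, 'n) monoid_scheme" +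
  fixes \<alpha> :: "'b \<Rightarrow> 'a \<Rightarrow> 'a"
  assumes action_hom: "\<alpha> \<in> hom Q (AutoGroup N)"
begin

lemma action_auto: "q \<in> carrier Q \<Longrightarrow> \<alpha> q \<in> auto N"
  using action_hom by (auto simp: hom_def AutoGroup_def)

sublocale action: group_action Q "carrier N" \<alpha>
proof -
  have "\<alpha> \<in> hom Q (BijGroup (carrier N))"
    using action_hom by (auto simp: hom_def AutoGroup_def BijGroup_def auto_def)
  then show "group_action Q (carrier N) \<alpha>"
    using Q.group_axioms group_BijGroup
    by (simp add: group_action_def group_hom_def group_hom_axioms_def)
qed

lemma action_group_hom: "q \<in> carrier Q \<Longrightarrow> group_hom N N (\<alpha> q)"
  using action_auto N.group_axioms by (simp add: group_hom_def group_hom_axioms_def auto_def)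

lemma action_closed [simp]: "q \<in> carrier Q \<Longrightarrow> n \<in> carrier N \<Longrightarrow> \<alpha> q n \<in> carrier N"
  by (rule group_hom.hom_closed[OF action_group_hom])

lemma action_mult [simp]:
  "q \<in> carrier Q \<Longrightarrow> x \<in> carrier N \<Longrightarrow> y \<in> carrier N \<Longrightarrow>
   \<alpha> q (x \<otimes>\<^bsub>N\<^esub> y) = \<alpha> q x \<otimes>\<^bsub>N\<^esub> \<alpha> q y"
  by (rule group_hom.hom_mult[OF action_group_hom])

lemma action_one_right [simp]: "q \<in> carrier Q \<Longrightarrow> \<alpha> q \<one>\<^bsub>N\<^esub> = \<one>\<^bsub>N\<^esub>"
  by (rule group_hom.hom_one[OF action_group_hom])

lemma action_one_left [simp]: "n \<in> carrier N \<Longrightarrow> \<alpha> \<one>\<^bsub>Q\<^esub> n = n"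
  by (simp flip: action.id_eq_one)

lemma action_compose:
  "p \<in> carrier Q \<Longrightarrow> q \<in> carrier Q \<Longrightarrow> n \<in> carrier N \<Longrightarrow>
   \<alpha> (p \<otimes>\<^bsub>Q\<^esub> q) n = \<alpha> p (\<alpha> q n)"
  by (rule action.composition_rule)

abbreviation \<Gamma> where "\<Gamma> \<equiv> semidirect_prod N Q \<alpha>"

lemma carrier_semidirect_prod [simp]: "carrier \<Gamma> = carrier N \<times> carrier Q"
  by (simp add: semidirect_prod_def)

lemma one_semidirect_prod [simp]: "\<one>\<^bsub>\<Gamma>\<^esub> = (\<one>\<^bsub>N\<^esub>, \<one>\<^bsub>Q\<^esub>)"
  by (simp add: semidirect_prod_def)

lemma mult_semidirect_prod [simp]:
  "(m, p) \<otimes>\<^bsub>\<Gamma>\<^esub> (n, q) = (m \<otimes>\<^bsub>N\<^esub> \<alpha> p n, p \<otimes>\<^bsub>Q\<^esub> q)"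
  by (simp add: semidirect_prod_def)

lemma group_semidirect_prod: "group \<Gamma>"
proof (rule groupI)
  fix x y z assume "x \<in> carrier \<Gamma>" "y \<in> carrier \<Gamma>" "z \<in> carrier \<Gamma>"
  then show "x \<otimes>\<^bsub>\<Gamma>\<^esub> y \<otimes>\<^bsub>\<Gamma>\<^esub> z = x \<otimes>\<^bsub>\<Gamma>\<^esub> (y \<otimes>\<^bsub>\<Gamma>\<^esub> z)"
    by (auto simp: action_compose N.m_assoc Q.m_assoc)
next
  fix x assume "x \<in> carrier \<Gamma>"
  then obtain n q where x: "x = (n, q)" "n \<in> carrier N" "q \<in> carrier Q" by auto
  then have "(\<alpha> (inv\<^bsub>Q\<^esub> q) (inv\<^bsub>N\<^esub> n), inv\<^bsub>Q\<^esub> q) \<otimes>\<^bsub>\<Gamma>\<^esub> x = \<one>\<^bsub>\<Gamma>\<^esub>"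
    by (simp flip: action_mult)
  then show "\<exists>y \<in> carrier \<Gamma>. y \<otimes>\<^bsub>\<Gamma>\<^esub> x = \<one>\<^bsub>\<Gamma>\<^esub>"
    using x by (metis N.inv_closed Q.inv_closed action_closed carrier_semidirect_prod mem_Sigma_iff)
qed auto

lemma group_hom_snd: "group_hom \<Gamma> Q snd"
  using group_semidirect_prod Q.group_axioms
  by (auto simp: group_hom_def group_hom_axioms_def hom_def)

lemma kernel_snd: "kernel \<Gamma> Q snd = normal_factor N Q"
  by (auto simp: kernel_def normal_factor_def)

lemma image_snd: "snd ` carrier \<Gamma> = carrier Q"
  by force

end

locale free_semidirect_product = semidirect_product +
  assumes free: "\<And>q n. q \<in> carrier Q \<Longrightarrow> n \<in> carrier N - {\<one>\<^bsub>N\<^esub>} \<Longrightarrow> \<alpha> q n = n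
                 \<Longrightarrow> q = \<one>\<^bsub>Q\<^esub>"
begin

lemma acentral_normal_factor:
  assumes "comm_group N"
  shows "acentral \<Gamma> (normal_factor N Q)"
  unfolding acentral_def
proof (intro conjI ballI subsetI)
  show "subgroup (normal_factor N Q) \<Gamma>"
    using group_hom.subgroup_kernel[OF group_hom_snd] by (simp add: kernel_snd)
next
  fix g h assume g: "g \<in> normal_factor N Q - {\<one>\<^bsub>\<Gamma>\<^esub>}" and h: "h \<in> centraliser \<Gamma> g"
  obtain n where gn: "g = (n, \<one>\<^bsub>Q\<^esub>)" "n \<in> carrier N" "n \<noteq> \<one>\<^bsub>N\<^esub>"
    using g by (auto simp: normal_factor_def)
  obtain m q where hm: "h = (m, q)" "m \<in> carrier N" "q \<in> carrier Q"
    using h by (auto simp: centraliser_def)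
  have "m \<otimes>\<^bsub>N\<^esub> \<alpha> q n = n \<otimes>\<^bsub>N\<^esub> m"
    using h gn hm by (simp add: centraliser_def)
  also have "\<dots> = m \<otimes>\<^bsub>N\<^esub> n"
    using gn hm comm_monoid.m_comm[OF comm_group.axioms(1)[OF assms]] by simp
  finally have "\<alpha> q n = n"
    using gn hm N.l_cancel[of m "\<alpha> q n" n] by simp
  then have "q = \<one>\<^bsub>Q\<^esub>"
    using free gn hm by blast
  then show "h \<in> normal_factor N Q"
    using hm by (simp add: normal_factor_def)
qed

lemma infinite_carrier_N_if_nontrivial:
  assumes "carrier N \<noteq> {\<one>\<^bsub>N\<^esub>}" and "infinite (carrier Q)"
  shows "infinite (carrier N)"
proof -
  obtain n where n: "n \<in> carrier N" "n \<noteq> \<one>\<^bsub>N\<^esub>"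
    using assms(1) N.one_closed by blast
  have "inj_on (\<lambda>q. \<alpha> q n) (carrier Q)"
  proof (rule inj_onI)
    fix p q assume pq: "p \<in> carrier Q" "q \<in> carrier Q" "\<alpha> p n = \<alpha> q n"
    have "\<alpha> (inv\<^bsub>Q\<^esub> q \<otimes>\<^bsub>Q\<^esub> p) n = \<alpha> (inv\<^bsub>Q\<^esub> q) (\<alpha> q n)"
      using pq n by (simp add: action_compose)
    also have "\<dots> = n"
      using pq n by (simp flip: action_compose)
    finally have "\<alpha> (inv\<^bsub>Q\<^esub> q \<otimes>\<^bsub>Q\<^esub> p) n = n" .
    then have "inv\<^bsub>Q\<^esub> q \<otimes>\<^bsub>Q\<^esub> p = \<one>\<^bsub>Q\<^esub>"
      using free pq n by simp
    then show "p = q"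
      using pq by (metis Q.inv_closed Q.inv_inv Q.inv_equality)
  qed
  moreover have "(\<lambda>q. \<alpha> q n) ` carrier Q \<subseteq> carrier N"
    using n by auto
  ultimately show ?thesis
    using assms(2) by (metis finite_imageD finite_subset)
qed

end

theorem corollary3p5:
  fixes N :: "('a, 'm) monoid_scheme" and Q :: "('b, 'n) monoid_scheme"
    and \<alpha> :: "'b \<Rightarrow> 'a \<Rightarrow> 'a"
  assumes N_abelian: "comm_group N"
    and N_nontrivial: "carrier N \<noteq> {\<one>\<^bsub>N\<^esub>}"
    and Q_group: "group Q"
    and Q_infinite: "infinite (carrier Q)"
    and \<alpha>_hom: "\<alpha> \<in> hom Q (AutoGroup N)"
    and free: "\<And>q n. q \<in> carrier Q \<Longrightarrow> n \<in> carrier N - {\<one>\<^bsub>N\<^esub>} \<Longrightarrow> \<alpha> q n = n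
                 \<Longrightarrow> q = \<one>\<^bsub>Q\<^esub>"
    and fg: "finitely_generated_group (semidirect_prod N Q \<alpha>)"
  shows "infinite (carrier N)
    \<and> acentral (semidirect_prod N Q \<alpha>) (normal_factor N Q)
    \<and> infinite (carrier (semidirect_prod N Q \<alpha>))
    \<and> (\<forall>(G1 :: ('c, 'd) monoid_scheme) (G2 :: ('e, 'f) monoid_scheme) \<phi>.
          product_presentation (semidirect_prod N Q \<alpha>) G1 G2 \<phi> \<longrightarrow>
            finite (\<phi> ` (carrier G1 \<times> {\<one>\<^bsub>G2\<^esub>})) \<or> finite (\<phi> ` ({\<one>\<^bsub>G1\<^esub>} \<times> carrier G2)))"
proof -
  have N_group: "group N"
    using N_abelian by (simp add: comm_group_def)
  interpret free_semidirect_product N Q \<alpha>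
    by (intro free_semidirect_product.intro semidirect_product.intro N_group Q_group
        semidirect_product_axioms.intro free_semidirect_product_axioms.intro \<alpha>_hom free)
  interpret snd: group_hom "semidirect_prod N Q \<alpha>" Q snd
    by (rule group_hom_snd)
  have N_infinite: "infinite (carrier N)"
    using infinite_carrier_N_if_nontrivial N_nontrivial Q_infinite by blast
  then have kernel_infinite: "infinite (kernel (semidirect_prod N Q \<alpha>) Q snd)"
    by (simp add: kernel_snd normal_factor_def finite_cartesian_product_iff infinite_imp_nonempty)
  have acentral: "acentral (semidirect_prod N Q \<alpha>) (kernel (semidirect_prod N Q \<alpha>) Q snd)"
    using acentral_normal_factor[OF N_abelian] by (simp add: kernel_snd)
  have image_infinite: "infinite (snd ` carrier (semidirect_prod N Q \<alpha>))"
    using Q_infinite image_snd by simp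
  have "finite (\<phi> ` (carrier G1 \<times> {\<one>\<^bsub>G2\<^esub>})) \<or> finite (\<phi> ` ({\<one>\<^bsub>G1\<^esub>} \<times> carrier G2))"
    if "product_presentation (semidirect_prod N Q \<alpha>) G1 G2 \<phi>"
    for G1 :: "('c, 'd) monoid_scheme" and G2 :: "('e, 'f) monoid_scheme" and \<phi>
    using snd.product_presentation_finite_factor[OF acentral kernel_infinite image_infinite that] .
  moreover have "infinite (carrier (semidirect_prod N Q \<alpha>))"
    using N_infinite Q_infinite by (simp add: finite_cartesian_product_iff infinite_imp_nonempty)
  ultimately show ?thesis
    using N_infinite acentral by (simp add: kernel_snd)
qed

end
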